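(* Let $d\ge2$. Let $\varphi:\mathbb N\to(0,\infty)$ satisfy $\lim_{k\to\infty}\varphi(k)=0$, and let $(\varrho_\nu)_{\nu\in\mathbb N}$ be real numbers with $\lim_{\nu\to\infty}\varrho_\nu=0$. Let $(E^\nu)_{\nu\in\mathbb N}$ be Lebesgue measurable subsets of $\mathbb R^d$ with $E^\nu=(E^\nu)^{\dagger\star}$ and $|E^\nu|=|\mathbb B_d|$, and suppose that for all $\nu$ and all $K\in\mathbb N$, $\sum_{|k|>K}|E^\nu_k|\le\varphi(K)+\varrho_\nu$. Then $\{E^\nu\}$ is a precompact family: every sequence of its members has a subsequence $(E^{\nu_n})$ for which there is a measurable set $E$ with $\lim_{n\to\infty}|E^{\nu_n}\,\Delta\,E|=0$.
   Context: $\mathbb B_d$ is the closed unit ball of $\mathbb R^d$. Write $x=(x',t)\in\mathbb R^{d-1}\times\mathbb R$, $\omega_{d-1}$ the volume of the unit ball of $\mathbb R^{d-1}$. Schwarz symmetrization: $E^\dagger=\{(x',x_d):r(x_d)>0,|x'|\le r(x_d)\}$ where $\omega_{d-1}r(t)^{d-1}=|\{y:(y,t)\in E\}|$. Steiner symmetrization: $E^\star=\{(x',t):|E^{x'}|>0,|t|\le\frac12|E^{x'}|\}$ where $E^{x'}=\{t:(x',t)\in E\}$. $E^{\dagger\star}=(E^\dagger)^\star$; set equalities are modulo null sets. For $E^\nu=(E^\nu)^{\dagger\star}$, $E^\nu=\{(x',t):|t|\le\frac12h_\nu(x')\}$ with $h_\nu(x')=|(E^\nu)^{x'}|$ radial and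 nonincreasing in $|x'|$, and $E^\nu_k=\{(x',t)\in E^\nu:2^{k-1}\le h_\nu(x')<2^k\}$ for $k\in\mathbb Z$. *)

theory Defs
  imports "HOL-Analysis.Analysis"
begin

text \<open>Points of R^d are modelled as pairs (x', t) in R^(d-1) x R, where
  R^(d-1) = real^'n with d - 1 = CARD('n) >= 1, so d >= 2 automatically.\<close>

definition hslice :: "((real^'n) \<times> real) set \<Rightarrow> real \<Rightarrow> (real^'n) set" where
  "hslice E t = {y. (y, t) \<in> E}"

definition vfiber :: "((real^'n) \<times> real) set \<Rightarrow> real^'n \<Rightarrow> real set" where
  "vfiber E x' = {t. (x', t) \<in> E}"

definition omega :: "'n::finite itself \<Rightarrow> ennreal" where
  "omega _ = emeasure lebesgue (cball (0::real^'n) 1)"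

text \<open>Schwarz symmetrization: |x'| <= r(t) where omega r(t)^(d-1) = |slice at t|,
  i.e. omega |x'|^(d-1) <= |slice at t| (and r(t) > 0 iff the slice has positive measure).\<close>
definition schwarz :: "((real^'n::finite) \<times> real) set \<Rightarrow> ((real^'n) \<times> real) set" where
  "schwarz E = {(x', t). 0 < emeasure lebesgue (hslice E t) \<and>
      omega TYPE('n) * ennreal (norm x' ^ CARD('n)) \<le> emeasure lebesgue (hslice E t)}"

definition steiner :: "((real^'n::finite) \<times> real) set \<Rightarrow> ((real^'n) \<times> real) set" where
  "steiner E = {(x', t). 0 < emeasure lebesgue (vfiber E x') \<and>
      ennreal (2 * \<bar>t\<bar>) \<le> emeasure lebesgue (vfiber E x')}"

definition sdiff :: "'a set \<Rightarrow> 'a set \<Rightarrow> 'a set" where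
  "sdiff A B = (A - B) \<union> (B - A)"

definition layer :: "((real^'n::finite) \<times> real) set \<Rightarrow> int \<Rightarrow> ((real^'n) \<times> real) set" where
  "layer E k = {p \<in> E. ennreal (2 powr (real_of_int k - 1)) \<le> emeasure lebesgue (vfiber E (fst p)) \<and>
      emeasure lebesgue (vfiber E (fst p)) < ennreal (2 powr real_of_int k)}"

end

theory Submission
  imports Defs "HOL-Probability.Helly_Selection"
begin

text \<open>A set \<open>E = E\<^sup>\<dagger>\<^sup>\<star>\<close> is determined, up to a null set, by its antitone radial profile \<open>h\<close>:
  \<open>E = {(x', t). \<bar>t\<bar> \<le> h \<bar>x'\<bar> / 2}\<close>. Helly's selection theorem, applied to the profiles, yields
  a subsequence whose profiles converge off a countable set of radii, so that the indicator functions
  of the sets converge almost everywhere. The tail hypothesis on the layers, together with the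
  fixed volume, keeps the family uniformly tight (large \<open>\<bar>x'\<bar>\<close> forces a small profile, large
  \<open>\<bar>t\<bar>\<close> a large one), and a.e. convergence plus uniform tightness gives convergence of the measure
  of the symmetric differences.\<close>

section \<open>Helly's selection theorem for monotone functions\<close>

lemma mono_right_limit:
  fixes f :: "real \<Rightarrow> real"
  assumes mono: "mono f" and bdd: "\<And>x. \<bar>f x\<bar> \<le> M"
  defines "g \<equiv> \<lambda>x. Inf (f ` {x<..})"
  shows "mono g" and "\<And>x. \<bar>g x\<bar> \<le> M" and "\<And>x. continuous (at_right x) g"
    and "\<And>x. isCont f x \<Longrightarrow> g x = f x"
proof -
  have ne: "f ` {x<..} \<noteq> {}" for x by auto
  have bdd_below: "bdd_below (f ` {x<..})" for x
    using bdd by (intro bdd_belowI[of _ "-M"]) (auto simp: abs_le_iff minus_le_iff)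
  have lower: "g x \<le> f y" if "x < y" for x y
    unfolding g_def using that bdd_below by (intro cInf_lower) auto
  have greatest: "c \<le> g x" if "\<And>y. x < y \<Longrightarrow> c \<le> f y" for c x
    unfolding g_def using that ne by (intro cInf_greatest) auto
  show "mono g"
    by (intro monoI greatest) (auto intro: lower)
  show "\<bar>g x\<bar> \<le> M" for x
  proof -
    have "g x \<le> f (x + 1)" by (rule lower) simp
    moreover have "- M \<le> g x" using bdd by (intro greatest) (auto simp: abs_le_iff minus_le_iff)
    ultimately show ?thesis using bdd[of "x + 1"] by (simp add: abs_le_iff)
  qed
  show "continuous (at_right x) g" for x
    unfolding continuous_within order_tendsto_iff eventually_at_right[OF less_add_one]
  proof safe
    fix u assume "g x < u"
    then obtain y where "x < y" "f y < u"
      unfolding g_def cInf_less_iff[OF ne bdd_below] by auto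
    then show "\<exists>b>x. \<forall>z>x. z < b \<longrightarrow> g z < u"
      using lower by (meson le_less_trans)
  next
    fix l assume "l < g x"
    then show "\<exists>b>x. \<forall>z>x. z < b \<longrightarrow> l < g z"
      using \<open>mono g\<close> by (meson less_add_one less_le_trans less_imp_le monoD)
  qed
  show "g x = f x" if cont: "isCont f x" for x
  proof (rule antisym)
    have "(f \<longlongrightarrow> f x) (at_right x)"
      using cont by (simp add: isCont_def filterlim_at_split)
    then show "g x \<le> f x"
      by (rule tendsto_lowerbound) (auto simp: eventually_at_filter intro: lower always_eventually)
    show "f x \<le> g x"
      using mono by (intro greatest) (simp add: monoD)
  qed
qed

text \<open>Helly's theorem without right continuity: apply it to the right limits, which agree with the
  original functions at their points of continuity.\<close>
lemma Helly_selection_mono: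
  fixes f :: "nat \<Rightarrow> real \<Rightarrow> real"
  assumes mono: "\<And>n. mono (f n)" and bdd: "\<And>n x. \<bar>f n x\<bar> \<le> M"
  shows "\<exists>s F. strict_mono s \<and> mono F \<and>
    (\<forall>x. isCont F x \<and> (\<forall>n. isCont (f n) x) \<longrightarrow> (\<lambda>n. f (s n) x) \<longlonglongrightarrow> F x)"
proof -
  define g where "g n x = Inf (f n ` {x<..})" for n x
  note g = mono_right_limit[OF mono bdd, folded g_def]
  obtain s F where "strict_mono s" "mono F"
    and conv: "\<And>x. isCont F x \<Longrightarrow> (\<lambda>n. g (s n) x) \<longlonglongrightarrow> F x"
    using Helly_selection[of g M] g by blast
  moreover have "(\<lambda>n. f (s n) x) \<longlonglongrightarrow> F x" if "isCont F x" "\<forall>n. isCont (f n) x" for x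
    using conv[OF that(1)] that(2) g(4) by simp
  ultimately show ?thesis by blast
qed

section \<open>Convergence in measure\<close>

lemma tendsto_zero_ennrealI:
  fixes f :: "nat \<Rightarrow> ennreal"
  assumes "\<And>e. 0 < e \<Longrightarrow> eventually (\<lambda>n. f n \<le> ennreal e) sequentially"
  shows "f \<longlonglongrightarrow> 0"
proof (rule tendsto_0_if_Limsup_eq_0_ennreal)
  have "limsup f \<le> 0 + ennreal e" if "0 < e" for e
    using Limsup_bounded[OF assms[OF that]] by simp
  then show "limsup f = 0"
    using ennreal_le_epsilon[of 0 "limsup f"] by simp
qed

lemma emeasure_UN_le_infsum:
  fixes A :: "int \<Rightarrow> 'a set"
  assumes A: "\<And>k. A k \<in> sets M"
  shows "emeasure M (\<Union>k\<in>J. A k) \<le> (\<Sum>\<^sub>\<infinity>k\<in>J. emeasure M (A k))"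
proof -
  define F where "F m = (\<Union>k\<in>J \<inter> {-int m..int m}. A k)" for m :: nat
  have F: "range F \<subseteq> sets M" "incseq F"
    using A unfolding F_def incseq_def by force+
  have "x \<in> (\<Union>m. F m)" if "k \<in> J" "x \<in> A k" for x k
    using that unfolding F_def by (intro UN_I[of "nat \<bar>k\<bar>"]) (auto intro!: bexI[of _ k])
  then have "(\<Union>m. F m) = (\<Union>k\<in>J. A k)"
    unfolding F_def by blast
  then have "emeasure M (\<Union>k\<in>J. A k) = (SUP m. emeasure M (F m))"
    using SUP_emeasure_incseq[OF F] by simp
  also have "\<dots> \<le> (\<Sum>\<^sub>\<infinity>k\<in>J. emeasure M (A k))"
  proof (rule SUP_least)
    fix m
    have "emeasure M (F m) \<le> (\<Sum>k\<in>J \<inter> {-int m..int m}. emeasure M (A k))"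
      unfolding F_def using A by (intro emeasure_subadditive_finite) auto
    also have "\<dots> \<le> (\<Sum>\<^sub>\<infinity>k\<in>J. emeasure M (A k))"
      unfolding nonneg_infsum_complete[of J "\<lambda>k. emeasure M (A k)", simplified]
      by (rule SUP_upper) auto
    finally show "emeasure M (F m) \<le> (\<Sum>\<^sub>\<infinity>k\<in>J. emeasure M (A k))" .
  qed
  finally show ?thesis .
qed

lemma emeasure_tendsto_zero_AE:
  assumes D: "\<And>m. D m \<in> sets M" "\<And>m. D m \<subseteq> B" and B: "B \<in> sets M" "emeasure M B < \<infinity>"
    and ae: "AE x in M. eventually (\<lambda>m. x \<notin> D m) sequentially"
  shows "(\<lambda>m. emeasure M (D m)) \<longlonglongrightarrow> 0"
proof -
  define W where "W N = (\<Union>m\<in>{N..}. D m)" for N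
  have W: "range W \<subseteq> sets M" "decseq W"
    using D(1) unfolding W_def decseq_def by (auto intro: order_trans)
  have "emeasure M (W N) < \<infinity>" for N
    using B D(2) by (intro le_less_trans[OF emeasure_mono B(2)]) (auto simp: W_def)
  then have W_fin: "emeasure M (W N) \<noteq> \<infinity>" for N
    by (simp add: less_top)
  have "AE x in M. x \<notin> (\<Inter>N. W N)"
    using ae by eventually_elim (auto simp: W_def eventually_sequentially)
  then have "emeasure M {x\<in>space M. x \<in> (\<Inter>N. W N)} = 0"
    by (rule emeasure_eq_0_AE)
  moreover have "{x\<in>space M. x \<in> (\<Inter>N. W N)} = (\<Inter>N. W N)"
    using sets.sets_into_space[of "W 0" M] W(1) by blast
  ultimately have lim: "(\<lambda>N. emeasure M (W N)) \<longlonglongrightarrow> 0"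
    using Lim_emeasure_decseq[OF W W_fin] by simp
  have "emeasure M (D N) \<le> emeasure M (W N)" for N
    using W(1) by (intro emeasure_mono) (auto simp: W_def)
  then show ?thesis
    by (intro tendsto_sandwich[OF _ _ tendsto_const lim]) simp_all
qed

lemma emeasure_le_of_AE_eventually_mem:
  assumes A: "\<And>m. A m \<in> sets M" "A' \<in> sets M"
    and ae: "AE x in M. x \<in> A' \<longrightarrow> eventually (\<lambda>m. x \<in> A m) sequentially"
    and le: "eventually (\<lambda>m. emeasure M (A m) \<le> c) sequentially"
  shows "emeasure M A' \<le> c"
proof -
  define W where "W N = (\<Inter>m\<in>{N..}. A m)" for N
  have W: "range W \<subseteq> sets M" "incseq W"
    using A unfolding W_def incseq_def by auto
  obtain N0 where N0: "\<And>m. m \<ge> N0 \<Longrightarrow> emeasure M (A m) \<le> c"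
    using le by (auto simp: eventually_sequentially)
  have "emeasure M A' \<le> emeasure M (\<Union>N. W N)"
    using ae W(1) by (intro emeasure_mono_AE) (auto simp: W_def eventually_sequentially elim!: eventually_mono)
  also have "\<dots> = (SUP N. emeasure M (W N))"
    using SUP_emeasure_incseq[OF W] by simp
  also have "\<dots> \<le> c"
  proof (rule SUP_least)
    fix N
    have "emeasure M (W N) \<le> emeasure M (A (max N N0))"
      using A W by (intro emeasure_mono) (auto simp: W_def)
    then show "emeasure M (W N) \<le> c"
      using N0[of "max N N0"] by simp
  qed
  finally show ?thesis .
qed

lemma emeasure_sdiff_tendsto_zero:
  assumes A: "\<And>m. A m \<in> sets M" "A' \<in> sets M"
    and ae: "AE x in M. eventually (\<lambda>m. x \<in> A m \<longleftrightarrow> x \<in> A') sequentially"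
    and tight: "\<And>e. 0 < e \<Longrightarrow> \<exists>B\<in>sets M. emeasure M B < \<infinity> \<and> (\<forall>m. emeasure M (A m - B) \<le> ennreal e)"
  shows "(\<lambda>m. emeasure M (sdiff (A m) A')) \<longlonglongrightarrow> 0"
proof (rule tendsto_zero_ennrealI)
  fix e :: real assume "0 < e"
  then obtain B where B: "B \<in> sets M" "emeasure M B < \<infinity>"
    and out: "\<And>m. emeasure M (A m - B) \<le> ennreal (e/3)"
    using tight[of "e/3"] by auto
  have "(\<lambda>m. emeasure M (sdiff (A m) A' \<inter> B)) \<longlonglongrightarrow> 0"
    using A B ae by (intro emeasure_tendsto_zero_AE[where B=B])
      (auto simp: sdiff_def elim!: eventually_mono)
  then have inside: "eventually (\<lambda>m. emeasure M (sdiff (A m) A' \<inter> B) \<le> ennreal (e/3)) sequentially"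
    using \<open>0 < e\<close> by (auto dest: order_tendstoD(2)[of _ 0 _ "ennreal (e/3)"] elim!: eventually_mono)
  have out': "emeasure M (A' - B) \<le> ennreal (e/3)"
    using A B ae out by (intro emeasure_le_of_AE_eventually_mem[where A="\<lambda>m. A m - B"])
      (auto elim!: eventually_mono)
  show "eventually (\<lambda>m. emeasure M (sdiff (A m) A') \<le> ennreal e) sequentially"
    using inside
  proof eventually_elim
    case (elim m)
    have "emeasure M (sdiff (A m) A') \<le> emeasure M ((sdiff (A m) A' \<inter> B) \<union> (A m - B) \<union> (A' - B))"
      using A B by (intro emeasure_mono) (auto simp: sdiff_def)
    also have "\<dots> \<le> emeasure M (sdiff (A m) A' \<inter> B) + emeasure M (A m - B) + emeasure M (A' - B)"
      using A B by (intro order_trans[OF emeasure_subadditive] add_right_mono emeasure_subadditive)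
        (auto simp: sdiff_def)
    also have "\<dots> \<le> ennreal (e/3) + ennreal (e/3) + ennreal (e/3)"
      using elim out[of m] out' by (intro add_mono) auto
    also have "\<dots> = ennreal e"
      using \<open>0 < e\<close> by (simp flip: ennreal_plus)
    finally show ?case .
  qed
qed

lemma emeasure_Diff_cball_tendsto_zero:
  fixes A :: "'a::euclidean_space set"
  assumes A: "A \<in> sets lborel" "emeasure lborel A < \<infinity>"
  shows "(\<lambda>n. emeasure lborel (A - cball 0 (real n))) \<longlonglongrightarrow> 0"
proof -
  define C where "C n = A - cball 0 (real n)" for n
  have C: "range C \<subseteq> sets lborel" "decseq C"
  proof -
    show "range C \<subseteq> sets lborel"
      using A(1) by (auto simp: C_def)
    show "decseq C"
    proof (rule decseq_SucI)
      fix n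
      have "cball 0 (real n) \<subseteq> cball (0::'a) (real (Suc n))"
        by (intro subset_cball) simp
      then show "C (Suc n) \<subseteq> C n"
        unfolding C_def by blast
    qed
  qed
  have "emeasure lborel (C n) < \<infinity>" for n
    using A unfolding C_def by (intro le_less_trans[OF emeasure_mono A(2)]) auto
  then have C_fin: "emeasure lborel (C n) \<noteq> \<infinity>" for n
    by (simp add: less_top)
  have "x \<notin> (\<Inter>n. C n)" for x
  proof -
    obtain n where "norm x \<le> real n"
      using real_arch_simple by blast
    then show ?thesis by (auto simp: C_def)
  qed
  then have "(\<Inter>n. C n) = {}" by blast
  then have "(\<lambda>n. emeasure lborel (C n)) \<longlonglongrightarrow> 0"
    using Lim_emeasure_decseq[OF C C_fin] by simp
  then show ?thesis
    by (simp only: C_def)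
qed

lemma uniformly_tight_if_eventually_tight:
  fixes A :: "nat \<Rightarrow> 'a::euclidean_space set"
  assumes A: "\<And>\<nu>. A \<nu> \<in> sets lborel" "\<And>\<nu>. emeasure lborel (A \<nu>) < \<infinity>"
    and tight: "\<exists>R. eventually (\<lambda>\<nu>. emeasure lborel (A \<nu> - cball 0 R) \<le> ennreal e) sequentially"
    and "0 < e"
  shows "\<exists>R. \<forall>\<nu>. emeasure lborel (A \<nu> - cball 0 R) \<le> ennreal e"
proof -
  obtain R0 N where R0: "\<And>\<nu>. N \<le> \<nu> \<Longrightarrow> emeasure lborel (A \<nu> - cball 0 R0) \<le> ennreal e"
    using tight by (auto simp: eventually_sequentially)
  have "\<exists>r. emeasure lborel (A \<nu> - cball 0 r) \<le> ennreal e" for \<nu>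
  proof -
    have "eventually (\<lambda>n. emeasure lborel (A \<nu> - cball 0 (real n)) < ennreal e) sequentially"
      using \<open>0 < e\<close> by (intro order_tendstoD(2)[OF emeasure_Diff_cball_tendsto_zero[OF A]]) simp
    then obtain n where "emeasure lborel (A \<nu> - cball 0 (real n)) < ennreal e"
      by (auto simp: eventually_sequentially)
    then show ?thesis
      by (blast intro: less_imp_le)
  qed
  then obtain r where r: "\<And>\<nu>. emeasure lborel (A \<nu> - cball 0 (r \<nu>)) \<le> ennreal e"
    by metis
  define R where "R = max R0 (Max (r ` {..<N}))"
  have mono: "emeasure lborel (A \<nu> - cball 0 R) \<le> emeasure lborel (A \<nu> - cball 0 R')" if "R' \<le> R" for \<nu> R'
    using A that by (intro emeasure_mono) auto
  have "emeasure lborel (A \<nu> - cball 0 R) \<le> ennreal e" for \<nu>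
  proof (cases "\<nu> < N")
    case True
    then have "r \<nu> \<le> R"
      unfolding R_def by (intro max.coboundedI2 Max_ge) auto
    then show ?thesis using r[of \<nu>] by (blast intro: order_trans mono)
  next
    case False
    then show ?thesis using mono[of R0 \<nu>] R0[of \<nu>] by (simp add: R_def)
  qed
  then show ?thesis by blast
qed

lemma emeasure_cball_unbounded:
  assumes "0 < a" "c < \<infinity>"
  shows "\<exists>R. \<forall>r. ennreal a * emeasure lborel (cball (0::'a::euclidean_space) r) \<le> c \<longrightarrow> r < R"
proof -
  obtain c0 where c0: "c = ennreal c0" "0 \<le> c0"
    using assms(2) by (cases c) auto
  define V where "V = unit_ball_vol (real DIM('a))"
  have "0 < V" unfolding V_def by simp
  define R where "R = max 1 (c0 / (a * V)) + 1"
  have "r < R" if le: "ennreal a * emeasure lborel (cball (0::'a) r) \<le> c" for r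
  proof (rule ccontr)
    assume "\<not> r < R"
    then have "1 \<le> r" "c0 / (a * V) < r"
      unfolding R_def by linarith+
    then have "c0 < a * V * r"
      using \<open>0 < a\<close> \<open>0 < V\<close> by (simp add: field_simps)
    also have "\<dots> \<le> a * V * r ^ DIM('a)"
      using \<open>1 \<le> r\<close> \<open>0 < a\<close> \<open>0 < V\<close> by (intro mult_left_mono self_le_power) auto
    finally have "c0 < a * V * r ^ DIM('a)" .
    moreover have "ennreal (a * V * r ^ DIM('a)) = ennreal a * emeasure lborel (cball (0::'a) r)"
      using \<open>0 < a\<close> \<open>0 < V\<close> \<open>1 \<le> r\<close> by (simp add: emeasure_cball V_def ennreal_mult mult.assoc)
    ultimately have "ennreal (a * V * r ^ DIM('a)) \<le> ennreal c0"
      using le c0 by simp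
    with \<open>c0 < a * V * r ^ DIM('a)\<close> show False
      using c0(2) by (simp add: ennreal_le_iff)
  qed
  then show ?thesis by blast
qed

lemma sphere_null_sets: "sphere (c::'a::euclidean_space) r \<in> null_sets lborel"
  using negligible_sphere[of c r]
  by (auto simp: null_sets_completion_iff negligible_iff_null_sets negligible_convex_frontier)

lemma null_sets_norm_in_countable:
  assumes "countable D"
  shows "{x::'a::euclidean_space. norm x \<in> D} \<in> null_sets lborel"
proof -
  have "{x::'a. norm x \<in> D} = (\<Union>d\<in>D. sphere 0 d)" by auto
  then show ?thesis
    using null_sets_UN'[OF assms sphere_null_sets] by simp
qed

lemma sdiff_sdiff: "sdiff (sdiff A C) (sdiff B C) = sdiff A B"
  by (auto simp: sdiff_def)

lemma AE_mem_iff_of_sdiff_null: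
  "sdiff A B \<in> null_sets M \<Longrightarrow> AE x in M. x \<in> A \<longleftrightarrow> x \<in> B"
  by (auto simp: sdiff_def dest!: AE_not_in elim!: eventually_mono)

lemma completion_AE_mem_iff:
  assumes ae: "AE x in completion M. x \<in> A \<longleftrightarrow> x \<in> B" and A: "A \<in> sets (completion M)"
    and B: "B \<subseteq> space M"
  shows "B \<in> sets (completion M)" and "emeasure (completion M) B = emeasure (completion M) A"
proof -
  show B_sets: "B \<in> sets (completion M)"
    using completion.in_sets_AE[OF ae A] B by simp
  show "emeasure (completion M) B = emeasure (completion M) A"
    using ae A B_sets by (intro emeasure_eq_AE) auto
qed

lemma emeasure_lebesgue_borel: "S \<in> sets lborel \<Longrightarrow> emeasure lebesgue S = emeasure lborel S"
  by (simp add: main_part_sets)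

lemma emeasure_lebesgue_eq_of_sdiff_null:
  assumes null: "sdiff A B \<in> null_sets lebesgue" and B: "B \<in> sets lborel"
  shows "emeasure lebesgue A = emeasure lborel (B :: 'a::euclidean_space set)"
proof -
  have "AE x in lebesgue. x \<in> B \<longleftrightarrow> x \<in> A"
    using AE_mem_iff_of_sdiff_null[OF null] by (auto elim: eventually_mono)
  from completion_AE_mem_iff(2)[OF this sets_completionI_sets[OF B]] show ?thesis
    using emeasure_lebesgue_borel[OF B] by simp
qed

lemma emeasure_sdiff_eq_of_sdiff_null:
  assumes "sdiff A B \<in> null_sets lebesgue" "B \<in> sets lborel" "C \<in> sets lborel"
  shows "emeasure lebesgue (sdiff A C) = emeasure lborel (sdiff B C :: 'a::euclidean_space set)"
proof (rule emeasure_lebesgue_eq_of_sdiff_null)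
  show "sdiff (sdiff A C) (sdiff B C) \<in> null_sets lebesgue"
    using assms(1) by (simp add: sdiff_sdiff)
  show "sdiff B C \<in> sets lborel"
    using assms(2,3) by (auto simp: sdiff_def)
qed

lemma AE_lebesgue_fibres:
  fixes P :: "'a::euclidean_space \<times> 'b::euclidean_space \<Rightarrow> bool"
  assumes "AE p in lebesgue. P p"
  shows "AE x in lborel. AE y in lebesgue. P (x, y)"
    and "AE y in lborel. AE x in lebesgue. P (x, y)"
proof -
  obtain N where N: "N \<in> null_sets lborel" "{p. \<not> P p} \<subseteq> N"
    using AE_completion_iff[THEN iffD1, OF assms] by (auto simp: eventually_ae_filter)
  have "N \<in> sets (lborel \<Otimes>\<^sub>M lborel)"
    unfolding lborel_prod using N(1) by (rule null_setsD2)
  then have N_sets: "{p \<in> space (lborel \<Otimes>\<^sub>M lborel). (fst p, snd p) \<notin> N} \<in> sets (lborel \<Otimes>\<^sub>M lborel)"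
    by (simp only: prod.collapse set_diff_eq[symmetric]) (rule sets.compl_sets)
  have "AE p in lborel \<Otimes>\<^sub>M lborel. p \<notin> N"
    unfolding lborel_prod using N(1) by (rule AE_not_in)
  then have AE1: "AE x in lborel. AE y in lborel. (x, y) \<notin> N"
    by (rule lborel_pair.AE_pair)
  then have AE2: "AE y in lborel. AE x in lborel. (x, y) \<notin> N"
    using lborel_pair.AE_commute[OF N_sets] by simp
  show "AE x in lborel. AE y in lebesgue. P (x, y)"
    using AE1 by eventually_elim (use N(2) in \<open>auto intro!: AE_completion elim!: eventually_mono\<close>)
  show "AE y in lborel. AE x in lebesgue. P (x, y)"
    using AE2 by eventually_elim (use N(2) in \<open>auto intro!: AE_completion elim!: eventually_mono\<close>)
qed

lemma AE_lborel_fst: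
  assumes "AE x in lborel. P x"
  shows "AE p in (lborel :: ('a::euclidean_space \<times> 'b::euclidean_space) measure). P (fst p)"
proof -
  obtain N where N: "N \<in> null_sets lborel" "{x. \<not> P x} \<subseteq> N"
    using assms by (auto simp: eventually_ae_filter)
  have "N \<times> UNIV \<in> null_sets (lborel \<Otimes>\<^sub>M (lborel :: 'b measure))"
    using N(1) by (intro lborel.times_in_null_sets1) auto
  then have "AE p in (lborel :: ('a \<times> 'b) measure). p \<notin> N \<times> UNIV"
    unfolding lborel_prod by (rule AE_not_in)
  then show ?thesis
    by eventually_elim (use N(2) in auto)
qed

section \<open>Radial sets\<close>

text \<open>An order embedding of \<open>[0, \<infinity>]\<close> into \<open>[0, 2]\<close> (recall \<open>arctan < pi/2 < 2\<close>); it turns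
  the profiles below into bounded monotone real functions, as required by Helly's theorem.\<close>
definition squash :: "ennreal \<Rightarrow> real" where
  "squash y = (if y = \<infinity> then 2 else arctan (enn2real y))"

lemma strict_mono_squash: "strict_mono squash"
proof (rule strict_monoI)
  fix x y :: ennreal assume "x < y"
  have "arctan z < 2" for z using arctan_ubound[of z] pi_less_4 by linarith
  then show "squash x < squash y"
    using \<open>x < y\<close>
    by (cases "y = \<infinity>") (auto simp: squash_def enn2real_less_iff less_top arctan_less_iff)
qed

lemma squash_less_iff [simp]: "squash x < squash y \<longleftrightarrow> x < y"
  using strict_mono_squash by (rule strict_mono_less)

lemma squash_le_iff [simp]: "squash x \<le> squash y \<longleftrightarrow> x \<le> y"
  using strict_mono_squash by (rule strict_mono_less_eq)

lemma abs_squash_le: "\<bar>squash y\<bar> \<le> 2"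
  using arctan_bounded[of "enn2real y"] pi_less_4 by (auto simp: squash_def)

lemma squash_ennreal: "0 \<le> a \<Longrightarrow> squash (ennreal a) = arctan a"
  by (simp add: squash_def)

lemma squash_zero: "squash 0 = 0"
  by (simp add: squash_def)

lemma squash_pos_iff: "0 < squash y \<longleftrightarrow> 0 < y"
  using squash_less_iff[of 0 y] by (simp add: squash_zero)

lemma arctan_le_squash_iff: "0 \<le> a \<Longrightarrow> arctan a \<le> squash y \<longleftrightarrow> ennreal a \<le> y"
  by (metis squash_ennreal squash_le_iff)

text \<open>A set that is symmetric in the sense of the theorem is, up to a null set, of the form
  \<open>{(x', t). \<bar>t\<bar> \<le> H \<bar>x'\<bar> / 2}\<close> with an antitone profile \<open>H\<close>; the vertical fibre over \<open>x'\<close>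
  then has length \<open>H \<bar>x'\<bar>\<close>, the paper's \<open>h\<^sub>\<nu>(x')\<close>.\<close>
definition radial_set :: "(real \<Rightarrow> ennreal) \<Rightarrow> ('a::real_normed_vector \<times> real) set" where
  "radial_set H = {(x, t). 0 < H (norm x) \<and> ennreal (2 * \<bar>t\<bar>) \<le> H (norm x)}"

definition squashed_radial_set :: "(real \<Rightarrow> real) \<Rightarrow> ('a::real_normed_vector \<times> real) set" where
  "squashed_radial_set G = {(x, t). 0 < G (norm x) \<and> arctan (2 * \<bar>t\<bar>) \<le> G (norm x)}"

lemma radial_set_eq_squashed: "radial_set H = squashed_radial_set (\<lambda>r. squash (H r))"
  by (auto simp: radial_set_def squashed_radial_set_def squash_pos_iff arctan_le_squash_iff)

lemma borel_measurable_antimono_norm_fst: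
  fixes G :: "real \<Rightarrow> real"
  assumes "antimono G"
  shows "(\<lambda>p::'a::euclidean_space \<times> 'b::euclidean_space. G (norm (fst p))) \<in> borel_measurable borel"
proof -
  have "mono (\<lambda>r. - G r)"
    using assms by (simp add: mono_def antimono_def)
  then have "(\<lambda>r. - (- G r)) \<in> borel_measurable borel"
    by (intro borel_measurable_uminus borel_measurable_mono)
  moreover have "(\<lambda>p::'a \<times> 'b. norm (fst p)) \<in> borel_measurable borel"
    by (intro borel_measurable_continuous_onI continuous_intros)
  ultimately show ?thesis
    using measurable_compose by fastforce
qed

lemma squashed_radial_set_borel:
  fixes G :: "real \<Rightarrow> real"
  assumes "antimono G"
  shows "(squashed_radial_set G :: ('a::euclidean_space \<times> real) set) \<in> sets lborel"
proof -
  have [measurable]: "(\<lambda>p::'a \<times> real. G (norm (fst p))) \<in> borel_measurable lborel"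
    using borel_measurable_antimono_norm_fst[OF assms] by simp
  have [measurable]: "(\<lambda>p::'a \<times> real. arctan (2 * \<bar>snd p\<bar>)) \<in> borel_measurable lborel"
    unfolding measurable_lborel2 by (intro borel_measurable_continuous_onI continuous_intros)
  have "{p \<in> space lborel. 0 < G (norm (fst p)) \<and> arctan (2 * \<bar>snd p\<bar>) \<le> G (norm (fst p))}
      \<in> sets (lborel :: ('a \<times> real) measure)"
    by measurable
  then show ?thesis
    by (simp add: squashed_radial_set_def case_prod_beta')
qed

lemma radial_set_borel: "antimono H \<Longrightarrow> radial_set H \<in> sets lborel"
  unfolding radial_set_eq_squashed
  by (intro squashed_radial_set_borel) (simp add: antimono_def)

lemma emeasure_symmetric_interval: "emeasure lborel {t::real. 0 < c \<and> ennreal (2 * \<bar>t\<bar>) \<le> c} = c"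
proof (cases c)
  case (real a)
  then have "{t::real. 0 < c \<and> ennreal (2 * \<bar>t\<bar>) \<le> c} = (if 0 < a then {-a/2..a/2} else {})"
    by (auto simp: abs_le_iff ennreal_eq_0_iff)
  then show ?thesis using real by (simp add: ennreal_eq_0_iff)
qed simp

lemma emeasure_radial_set_fibre: "emeasure lborel (Pair x -` radial_set H) = H (norm x)"
  by (simp add: radial_set_def emeasure_symmetric_interval)

text \<open>\<open>H \<circ> norm\<close> is the fibre measure of the Borel set \<open>radial_set H\<close>.\<close>
lemma borel_measurable_radial_profile:
  fixes H :: "real \<Rightarrow> ennreal"
  assumes "antimono H"
  shows "(\<lambda>x::'a::euclidean_space. H (norm x)) \<in> borel_measurable lborel"
proof -
  have "(radial_set H :: ('a \<times> real) set) \<in> sets (lborel \<Otimes>\<^sub>M lborel)"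
    unfolding lborel_prod by (rule radial_set_borel[OF assms])
  from lborel_pair.measurable_emeasure_Pair1[OF this] show ?thesis
    by (simp add: emeasure_radial_set_fibre)
qed

lemma emeasure_radial_set_ge:
  fixes H :: "real \<Rightarrow> ennreal"
  assumes "antimono H"
  shows "emeasure lborel (cball (0::'a::euclidean_space) r) * H r
    \<le> emeasure lborel (radial_set H :: ('a \<times> real) set)"
proof -
  let ?I = "{t::real. 0 < H r \<and> ennreal (2 * \<bar>t\<bar>) \<le> H r}"
  have "cball (0::'a) r \<times> ?I \<subseteq> radial_set H"
    using assms by (auto simp: radial_set_def antimono_def intro: less_le_trans order_trans)
  then have "emeasure (lborel \<Otimes>\<^sub>M lborel) (cball (0::'a) r \<times> ?I)
      \<le> emeasure lborel (radial_set H :: ('a \<times> real) set)"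
    unfolding lborel_prod by (rule emeasure_mono) (rule radial_set_borel[OF assms])
  moreover have "{t \<in> space lborel. 0 < H r \<and> ennreal (2 * \<bar>t\<bar>) \<le> H r} \<in> sets lborel"
    by measurable
  ultimately show ?thesis
    by (simp add: lborel.emeasure_pair_measure_Times emeasure_symmetric_interval)
qed

lemma radial_profile_finite:
  fixes H :: "real \<Rightarrow> ennreal"
  assumes "antimono H" and fin: "emeasure lborel (radial_set H :: ('a::euclidean_space \<times> real) set) < \<infinity>"
    and "0 < r"
  shows "H r < \<infinity>"
proof (rule ccontr)
  assume "\<not> H r < \<infinity>"
  moreover have "0 < emeasure lborel (cball (0::'a) r)"
    using \<open>0 < r\<close> by (simp add: emeasure_cball)
  ultimately have "emeasure lborel (cball (0::'a) r) * H r = \<infinity>"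
    by (simp add: less_top[symmetric] ennreal_mult_eq_top_iff)
  then show False
    using emeasure_radial_set_ge[OF \<open>antimono H\<close>, of r] fin by (auto dest: le_less_trans)
qed

text \<open>Every vertical fibre of this graph has at most two points.\<close>
lemma null_sets_arctan_graph:
  fixes G :: "real \<Rightarrow> real"
  assumes "antimono G"
  shows "{(x, t). arctan (2 * \<bar>t\<bar>) = G (norm x)} \<in> null_sets (lborel :: ('a::euclidean_space \<times> real) measure)"
proof -
  define Z :: "('a \<times> real) set" where "Z = {(x, t). arctan (2 * \<bar>t\<bar>) = G (norm x)}"
  have [measurable]: "(\<lambda>p::'a \<times> real. G (norm (fst p))) \<in> borel_measurable lborel"
    using borel_measurable_antimono_norm_fst[OF assms] by simp
  have [measurable]: "(\<lambda>p::'a \<times> real. arctan (2 * \<bar>snd p\<bar>)) \<in> borel_measurable lborel"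
    unfolding measurable_lborel2 by (intro borel_measurable_continuous_onI continuous_intros)
  have "{p \<in> space lborel. arctan (2 * \<bar>snd p\<bar>) = G (norm (fst p))} \<in> sets (lborel :: ('a \<times> real) measure)"
    by measurable
  then have Z: "Z \<in> sets (lborel \<Otimes>\<^sub>M lborel)"
    unfolding lborel_prod by (simp add: Z_def case_prod_beta')
  have "Pair x -` Z \<subseteq> {tan (G (norm x)) / 2, - tan (G (norm x)) / 2}" for x
  proof
    fix t assume "t \<in> Pair x -` Z"
    then have "2 * \<bar>t\<bar> = tan (G (norm x))"
      using tan_arctan[of "2 * \<bar>t\<bar>"] by (simp add: Z_def)
    then show "t \<in> {tan (G (norm x)) / 2, - tan (G (norm x)) / 2}"
      by (auto simp: abs_if split: if_splits)
  qed
  then have "emeasure lborel (Pair x -` Z) = 0" for x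
    by (intro emeasure_lborel_countable) (meson countable_finite countable_subset finite.emptyI finite_insert)
  then have "emeasure (lborel \<Otimes>\<^sub>M lborel) Z = 0"
    by (simp add: lborel.emeasure_pair_measure_alt[OF Z])
  with Z show ?thesis
    unfolding Z_def lborel_prod by auto
qed

lemma AE_eventually_mem_squashed_radial_set:
  fixes G :: "real \<Rightarrow> real" and Gs :: "nat \<Rightarrow> real \<Rightarrow> real"
  assumes G: "antimono G" and C: "countable C"
    and conv: "\<And>r. r \<notin> C \<Longrightarrow> (\<lambda>m. Gs m r) \<longlonglongrightarrow> G r"
  shows "AE p in lborel. eventually (\<lambda>m. p \<in> squashed_radial_set (Gs m) \<longleftrightarrow>
      p \<in> (squashed_radial_set G :: ('a::euclidean_space \<times> real) set)) sequentially"
proof -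
  define Z1 :: "('a \<times> real) set" where "Z1 = {x. norm x \<in> C} \<times> UNIV"
  define Z2 :: "('a \<times> real) set" where "Z2 = {(x, t). arctan (2 * \<bar>t\<bar>) = G (norm x)}"
  have "Z1 \<in> null_sets lborel"
    unfolding Z1_def lborel_prod[symmetric]
    by (intro lborel.times_in_null_sets1 null_sets_norm_in_countable C) simp
  moreover have "Z2 \<in> null_sets lborel"
    unfolding Z2_def by (rule null_sets_arctan_graph[OF G])
  ultimately have "AE p in lborel. p \<notin> Z1 \<union> Z2"
    by (intro AE_not_in) auto
  then show ?thesis
  proof eventually_elim
    case (elim p)
    obtain x t where p: "p = (x, t)" by (cases p)
    define v where "v = arctan (2 * \<bar>t\<bar>)"
    have "0 \<le> v" "v \<noteq> G (norm x)" and lim: "(\<lambda>m. Gs m (norm x)) \<longlonglongrightarrow> G (norm x)"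
      using elim by (auto simp: p v_def Z1_def Z2_def intro: conv)
    then consider "v < G (norm x)" | "G (norm x) < v" by linarith
    then show ?case
    proof cases
      case 1
      from order_tendstoD(1)[OF lim 1] show ?thesis
        by eventually_elim (use 1 \<open>0 \<le> v\<close> in \<open>auto simp: p squashed_radial_set_def v_def[symmetric]\<close>)
    next
      case 2
      from order_tendstoD(2)[OF lim 2] show ?thesis
        by eventually_elim (use 2 in \<open>auto simp: p squashed_radial_set_def v_def[symmetric]\<close>)
    qed
  qed
qed

lemma radial_sets_convergent_subseq:
  fixes H :: "nat \<Rightarrow> real \<Rightarrow> ennreal"
  assumes anti: "\<And>\<nu>. antimono (H \<nu>)"
    and tight: "\<And>e. 0 < e \<Longrightarrow> \<exists>R. \<forall>\<nu>.
      emeasure lborel (radial_set (H \<nu>) - cball 0 R :: ('a::euclidean_space \<times> real) set) \<le> ennreal e"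
  shows "\<exists>s. strict_mono s \<and> (\<exists>S\<in>sets lborel.
    (\<lambda>n. emeasure lborel (sdiff (radial_set (H (s n))) S :: ('a \<times> real) set)) \<longlonglongrightarrow> 0)"
proof -
  define f where "f \<nu> r = - squash (H \<nu> r)" for \<nu> r
  have "mono (f \<nu>)" for \<nu>
    using anti[of \<nu>] by (auto simp: f_def mono_def antimono_def)
  moreover have "\<bar>f \<nu> r\<bar> \<le> 2" for \<nu> r
    using abs_squash_le by (simp add: f_def)
  ultimately obtain s F where s: "strict_mono s" and "mono F"
    and conv: "\<And>r. isCont F r \<and> (\<forall>\<nu>. isCont (f \<nu>) r) \<Longrightarrow> (\<lambda>n. f (s n) r) \<longlonglongrightarrow> F r"
    using Helly_selection_mono[of f 2] by blast
  define C where "C = {r. \<not> isCont F r} \<union> (\<Union>\<nu>. {r. \<not> isCont (f \<nu>) r})"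
  have "countable C"
    unfolding C_def using mono_ctble_discont \<open>mono F\<close> \<open>\<And>\<nu>. mono (f \<nu>)\<close> by auto
  define G where "G r = - F r" for r
  have "antimono G"
    using \<open>mono F\<close> by (simp add: G_def mono_def antimono_def)
  have "(\<lambda>n. squash (H (s n) r)) \<longlonglongrightarrow> G r" if "r \<notin> C" for r
    using tendsto_minus[OF conv[of r]] that by (simp add: C_def f_def G_def)
  then have "AE p in lborel. eventually (\<lambda>n. p \<in> radial_set (H (s n)) \<longleftrightarrow>
      p \<in> (squashed_radial_set G :: ('a \<times> real) set)) sequentially"
    unfolding radial_set_eq_squashed
    by (rule AE_eventually_mem_squashed_radial_set[OF \<open>antimono G\<close> \<open>countable C\<close>])
  moreover have "\<exists>B\<in>sets lborel. emeasure lborel B < \<infinity> \<and>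
      (\<forall>n. emeasure lborel (radial_set (H (s n)) - B :: ('a \<times> real) set) \<le> ennreal e)" if e: "0 < e" for e
  proof -
    obtain R where "\<forall>\<nu>. emeasure lborel (radial_set (H \<nu>) - cball 0 R :: ('a \<times> real) set) \<le> ennreal e"
      using tight[OF e] by blast
    then show ?thesis
      using emeasure_lborel_cball_finite[of "0::'a \<times> real" R] by (intro bexI[of _ "cball 0 R"]) auto
  qed
  ultimately have "(\<lambda>n. emeasure lborel (sdiff (radial_set (H (s n))) (squashed_radial_set G)
      :: ('a \<times> real) set)) \<longlonglongrightarrow> 0"
    using radial_set_borel[OF anti] squashed_radial_set_borel[OF \<open>antimono G\<close>]
    by (intro emeasure_sdiff_tendsto_zero) auto
  then show ?thesis
    using s squashed_radial_set_borel[OF \<open>antimono G\<close>] by blast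
qed

section \<open>Layers and tightness\<close>

lemma emeasure_vfiber_AE_eq:
  fixes E F :: "((real^'n::finite) \<times> real) set"
  assumes F: "F \<in> sets lborel" and null: "sdiff E F \<in> null_sets lebesgue"
  shows "AE x in lborel. emeasure lebesgue (vfiber E x) = emeasure lborel (Pair x -` F)"
  using AE_lebesgue_fibres(1)[OF AE_mem_iff_of_sdiff_null[OF null]]
proof eventually_elim
  case (elim x)
  have fibre: "Pair x -` F \<in> sets lborel"
    using F unfolding lborel_prod[symmetric] by (rule sets_Pair1)
  have "AE y in lebesgue. y \<in> Pair x -` F \<longleftrightarrow> y \<in> vfiber E x"
    using elim by (auto simp: vfiber_def elim: eventually_mono)
  from completion_AE_mem_iff(2)[OF this sets_completionI_sets[OF fibre]] fibre show ?case
    by simp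
qed

lemma emeasure_vfiber_radial_set:
  "emeasure lebesgue (vfiber (radial_set H :: ((real^'n::finite) \<times> real) set) x) = H (norm x)"
proof -
  have "{t \<in> space lborel. 0 < H (norm x) \<and> ennreal (2 * \<bar>t\<bar>) \<le> H (norm x)} \<in> sets lborel"
    by measurable
  then show ?thesis
    using emeasure_symmetric_interval[of "H (norm x)"] by (simp add: vfiber_def radial_set_def)
qed

lemma layer_radial_set:
  "layer (radial_set H) k = {p \<in> radial_set H.
    ennreal (2 powr (real_of_int k - 1)) \<le> H (norm (fst p)) \<and> H (norm (fst p)) < ennreal (2 powr real_of_int k)}"
  by (simp add: layer_def emeasure_vfiber_radial_set)

lemma layer_radial_set_borel:
  fixes H :: "real \<Rightarrow> ennreal"
  assumes "antimono H"
  shows "layer (radial_set H :: ((real^'n::finite) \<times> real) set) k \<in> sets lborel"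
proof -
  have [measurable]: "(\<lambda>x::real^'n. H (norm x)) \<in> borel_measurable lborel"
    by (rule borel_measurable_radial_profile[OF assms])
  have [measurable]: "(radial_set H :: ((real^'n) \<times> real) set) \<in> sets (lborel \<Otimes>\<^sub>M lborel)"
    unfolding lborel_prod by (rule radial_set_borel[OF assms])
  have "layer (radial_set H) k = {p \<in> space (lborel \<Otimes>\<^sub>M lborel). p \<in> (radial_set H :: ((real^'n) \<times> real) set) \<and>
      ennreal (2 powr (real_of_int k - 1)) \<le> H (norm (fst p)) \<and> H (norm (fst p)) < ennreal (2 powr real_of_int k)}"
    unfolding layer_radial_set space_pair_measure by auto
  also have "\<dots> \<in> sets (lborel \<Otimes>\<^sub>M lborel)"
    by measurable
  finally show ?thesis
    by (simp only: lborel_prod)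
qed

lemma emeasure_layer_eq_radial:
  fixes E :: "((real^'n::finite) \<times> real) set"
  assumes anti: "antimono H" and null: "sdiff E (radial_set H) \<in> null_sets lebesgue"
  shows "emeasure lebesgue (layer E k) = emeasure lborel (layer (radial_set H :: ((real^'n) \<times> real) set) k)"
proof -
  have "AE x in lborel. emeasure lebesgue (vfiber E x) = H (norm x)"
    using emeasure_vfiber_AE_eq[OF radial_set_borel[OF anti] null] by (simp add: emeasure_radial_set_fibre)
  then have "AE p in lebesgue. emeasure lebesgue (vfiber E (fst p)) = H (norm (fst p))"
    by (intro AE_completion AE_lborel_fst)
  with AE_mem_iff_of_sdiff_null[OF null]
  have "AE p in lebesgue. p \<in> layer (radial_set H) k \<longleftrightarrow> p \<in> layer E k"
    by eventually_elim (auto simp: layer_def emeasure_vfiber_radial_set)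
  from completion_AE_mem_iff(2)[OF this sets_completionI_sets[OF layer_radial_set_borel[OF anti]]]
  show ?thesis
    using emeasure_lebesgue_borel[OF layer_radial_set_borel[OF anti]] by simp
qed

lemma dyadic_layer_exists:
  fixes h :: ennreal
  assumes "0 < h" "h < \<infinity>"
  shows "\<exists>k::int. ennreal (2 powr (real_of_int k - 1)) \<le> h \<and> h < ennreal (2 powr real_of_int k)"
proof -
  obtain h0 where h0: "h = ennreal h0" "0 < h0"
    using assms by (cases h) (auto simp: ennreal_eq_0_iff)
  define k where "k = \<lfloor>log 2 h0\<rfloor> + 1"
  have "2 powr (real_of_int k - 1) \<le> 2 powr (log 2 h0)"
    unfolding k_def by (intro powr_mono) auto
  moreover have "2 powr (log 2 h0) < 2 powr real_of_int k"
    unfolding k_def by (intro powr_less_mono) linarith+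
  ultimately show ?thesis
    using h0 by (intro exI[of _ k]) (simp add: ennreal_less_iff)
qed

lemma radial_set_subset_layers:
  fixes H :: "real \<Rightarrow> ennreal"
  assumes anti: "antimono H" and fin: "emeasure lborel (radial_set H :: ((real^'n::finite) \<times> real) set) < \<infinity>"
  shows "(radial_set H :: ((real^'n) \<times> real) set) \<subseteq> (\<Union>k. layer (radial_set H) k) \<union> ({0} \<times> UNIV)"
proof
  fix p :: "(real^'n) \<times> real" assume p: "p \<in> radial_set H"
  obtain x t where pxt: "p = (x, t)" by fastforce
  show "p \<in> (\<Union>k. layer (radial_set H) k) \<union> ({0} \<times> UNIV)"
  proof (cases "x = 0")
    case True
    then show ?thesis by (simp add: pxt)
  next
    case False
    have "0 < H (norm x)"
      using p by (simp add: pxt radial_set_def)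
    moreover have "H (norm x) < \<infinity>"
      using radial_profile_finite[OF anti fin, of "norm x"] False by simp
    ultimately obtain k where "ennreal (2 powr (real_of_int k - 1)) \<le> H (norm x)"
      "H (norm x) < ennreal (2 powr real_of_int k)"
      using dyadic_layer_exists by blast
    then have "p \<in> layer (radial_set H) k"
      using p by (simp add: layer_radial_set pxt)
    then show ?thesis by blast
  qed
qed

text \<open>Points of a layer \<open>\<bar>k\<bar> \<le> K\<close> have a profile of at least \<open>2 powr -(K+1)\<close>, which by
  \<open>emeasure_radial_set_ge\<close> bounds \<open>\<bar>x'\<bar>\<close>; and \<open>\<bar>t\<bar>\<close> is at most half the profile \<open>< 2 powr k\<close>.\<close>
lemma layer_radial_set_subset_cball:
  fixes H :: "real \<Rightarrow> ennreal"
  assumes anti: "antimono H" and le: "emeasure lborel (radial_set H :: ((real^'n::finite) \<times> real) set) \<le> c"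
    and R0: "\<And>r. ennreal (2 powr - (real K + 1)) * emeasure lborel (cball (0::real^'n) r) \<le> c \<Longrightarrow> r < R0"
    and k: "\<bar>k\<bar> \<le> int K"
  shows "layer (radial_set H :: ((real^'n) \<times> real) set) k \<subseteq> cball 0 (R0 + 2 powr real K)"
proof
  fix p :: "(real^'n) \<times> real" assume p: "p \<in> layer (radial_set H) k"
  obtain x t where pxt: "p = (x, t)" by fastforce
  from p have low: "ennreal (2 powr (real_of_int k - 1)) \<le> H (norm x)"
    and up: "H (norm x) < ennreal (2 powr real_of_int k)" and t: "ennreal (2 * \<bar>t\<bar>) \<le> H (norm x)"
    unfolding layer_radial_set by (auto simp: radial_set_def pxt)
  have "2 powr - (real K + 1) \<le> 2 powr (real_of_int k - 1)"
    using k by (intro powr_mono) auto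
  then have "ennreal (2 powr - (real K + 1)) \<le> H (norm x)"
    using low by (meson ennreal_leI order_trans)
  then have "ennreal (2 powr - (real K + 1)) * emeasure lborel (cball (0::real^'n) (norm x))
      \<le> emeasure lborel (cball (0::real^'n) (norm x)) * H (norm x)"
    by (subst mult.commute) (rule mult_left_mono, auto)
  also have "\<dots> \<le> c"
    using emeasure_radial_set_ge[OF anti] le by (rule order_trans)
  finally have "norm x < R0" by (rule R0)
  moreover have "2 * \<bar>t\<bar> < 2 powr real_of_int k"
    using order.strict_trans1[OF t up] by (simp add: ennreal_less_iff)
  moreover have "2 powr real_of_int k \<le> 2 powr real K"
    using k by (intro powr_mono) auto
  ultimately have "norm x + \<bar>t\<bar> \<le> R0 + 2 powr real K"
    by linarith
  then show "p \<in> cball 0 (R0 + 2 powr real K)"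
    using norm_Pair_le[of x t] by (simp add: pxt)
qed

lemma emeasure_radial_set_outside_cball_le:
  fixes c :: ennreal and K :: nat
  assumes "c < \<infinity>"
  shows "\<exists>R. \<forall>H. antimono H \<longrightarrow> emeasure lborel (radial_set H :: ((real^'n::finite) \<times> real) set) \<le> c \<longrightarrow>
    emeasure lborel (radial_set H - cball 0 R :: ((real^'n) \<times> real) set)
      \<le> (\<Sum>\<^sub>\<infinity>k\<in>{k. int K < \<bar>k\<bar>}. emeasure lborel (layer (radial_set H :: ((real^'n) \<times> real) set) k))"
proof -
  obtain R0 where R0: "\<And>r. ennreal (2 powr - (real K + 1)) * emeasure lborel (cball (0::real^'n) r) \<le> c \<Longrightarrow> r < R0"
    using emeasure_cball_unbounded[OF _ assms, of "2 powr - (real K + 1)"] by auto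
  define R where "R = R0 + 2 powr real K"
  have "emeasure lborel (radial_set H - cball 0 R :: ((real^'n) \<times> real) set)
      \<le> (\<Sum>\<^sub>\<infinity>k\<in>{k. int K < \<bar>k\<bar>}. emeasure lborel (layer (radial_set H :: ((real^'n) \<times> real) set) k))"
    if anti: "antimono H" and le: "emeasure lborel (radial_set H :: ((real^'n) \<times> real) set) \<le> c" for H
  proof -
    let ?S = "radial_set H :: ((real^'n) \<times> real) set"
    let ?T = "\<Union>k\<in>{k. int K < \<bar>k\<bar>}. layer ?S k"
    have "?S - cball 0 R \<subseteq> ?T \<union> ({0} \<times> UNIV)"
    proof
      fix p assume p: "p \<in> ?S - cball 0 R"
      then have "p \<in> (\<Union>k. layer ?S k) \<union> ({0} \<times> UNIV)"
        using radial_set_subset_layers[OF anti] le assms by (blast dest: le_less_trans)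
      moreover have "p \<notin> layer ?S k" if "\<bar>k\<bar> \<le> int K" for k
        using p layer_radial_set_subset_cball[OF anti le R0 that] by (auto simp: R_def)
      ultimately show "p \<in> ?T \<union> ({0} \<times> UNIV)"
        by (force simp: not_less)
    qed
    moreover have T: "?T \<in> sets lborel"
      using layer_radial_set_borel[OF anti] by (intro sets.countable_UN') auto
    moreover have "{0::real^'n} \<times> (UNIV :: real set) \<in> null_sets lborel"
      unfolding lborel_prod[symmetric] by (intro lborel.times_in_null_sets1) auto
    ultimately have "emeasure lborel (?S - cball 0 R) \<le> emeasure lborel ?T"
      by (metis emeasure_Un_null_set emeasure_mono null_setsD2 sets.Un)
    also have "\<dots> \<le> (\<Sum>\<^sub>\<infinity>k\<in>{k. int K < \<bar>k\<bar>}. emeasure lborel (layer ?S k))"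
      by (rule emeasure_UN_le_infsum[OF layer_radial_set_borel[OF anti]])
    finally show ?thesis .
  qed
  then show ?thesis by blast
qed

lemma radial_sets_outside_cball_le_tail:
  fixes Es :: "nat \<Rightarrow> ((real^'n::finite) \<times> real) set" and H :: "nat \<Rightarrow> real \<Rightarrow> ennreal"
  assumes anti: "\<And>\<nu>. antimono (H \<nu>)"
    and null: "\<And>\<nu>. sdiff (Es \<nu>) (radial_set (H \<nu>)) \<in> null_sets lebesgue"
    and vol: "\<And>\<nu>. emeasure lborel (radial_set (H \<nu>) :: ((real^'n) \<times> real) set) \<le> c" and "c < \<infinity>"
    and tail: "\<And>\<nu>. (\<Sum>\<^sub>\<infinity>k\<in>{k. int K < \<bar>k\<bar>}. emeasure lebesgue (layer (Es \<nu>) k)) \<le> b \<nu>"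
  shows "\<exists>R. \<forall>\<nu>. emeasure lborel (radial_set (H \<nu>) - cball 0 R :: ((real^'n) \<times> real) set) \<le> b \<nu>"
proof -
  obtain R where "\<forall>H. antimono H \<longrightarrow> emeasure lborel (radial_set H :: ((real^'n) \<times> real) set) \<le> c \<longrightarrow>
      emeasure lborel (radial_set H - cball 0 R :: ((real^'n) \<times> real) set)
        \<le> (\<Sum>\<^sub>\<infinity>k\<in>{k. int K < \<bar>k\<bar>}. emeasure lborel (layer (radial_set H :: ((real^'n) \<times> real) set) k))"
    using emeasure_radial_set_outside_cball_le[OF \<open>c < \<infinity>\<close>, of K] by blast
  note R = this[rule_format, OF anti vol]
  have "emeasure lborel (radial_set (H \<nu>) - cball 0 R :: ((real^'n) \<times> real) set) \<le> b \<nu>" for \<nu>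
    using R[of \<nu>] tail[of \<nu>] unfolding emeasure_layer_eq_radial[OF anti null] by (rule order_trans)
  then show ?thesis by blast
qed

lemma radial_sets_uniformly_tight:
  fixes Es :: "nat \<Rightarrow> ((real^'n::finite) \<times> real) set" and H :: "nat \<Rightarrow> real \<Rightarrow> ennreal"
  assumes anti: "\<And>\<nu>. antimono (H \<nu>)"
    and null: "\<And>\<nu>. sdiff (Es \<nu>) (radial_set (H \<nu>)) \<in> null_sets lebesgue"
    and vol: "\<And>\<nu>. emeasure lebesgue (Es \<nu>) \<le> c" and "c < \<infinity>"
    and tail: "\<And>\<nu> K. (\<Sum>\<^sub>\<infinity>k\<in>{k. int K < \<bar>k\<bar>}. emeasure lebesgue (layer (Es \<nu>) k)) \<le> ennreal (\<phi> K + \<rho> \<nu>)"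
    and phi: "\<phi> \<longlonglongrightarrow> 0" and rho: "\<rho> \<longlonglongrightarrow> 0" and "0 < e"
  shows "\<exists>R. \<forall>\<nu>. emeasure lborel (radial_set (H \<nu>) - cball 0 R :: ((real^'n) \<times> real) set) \<le> ennreal e"
proof (rule uniformly_tight_if_eventually_tight)
  have S_vol: "emeasure lborel (radial_set (H \<nu>) :: ((real^'n) \<times> real) set) \<le> c" for \<nu>
    unfolding emeasure_lebesgue_eq_of_sdiff_null[OF null radial_set_borel[OF anti], symmetric] by (rule vol)
  then show "emeasure lborel (radial_set (H \<nu>) :: ((real^'n) \<times> real) set) < \<infinity>" for \<nu>
    using \<open>c < \<infinity>\<close> by (rule le_less_trans)
  show "radial_set (H \<nu>) \<in> sets lborel" for \<nu>
    by (rule radial_set_borel[OF anti])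
  obtain K where K: "\<phi> K < e / 2"
    using order_tendstoD(2)[OF phi, of "e / 2"] \<open>0 < e\<close> by (auto simp: eventually_sequentially)
  obtain R where R: "\<And>\<nu>. emeasure lborel (radial_set (H \<nu>) - cball 0 R :: ((real^'n) \<times> real) set)
      \<le> ennreal (\<phi> K + \<rho> \<nu>)"
    using radial_sets_outside_cball_le_tail[where b="\<lambda>\<nu>. ennreal (\<phi> K + \<rho> \<nu>)" and K=K,
        OF anti null S_vol \<open>c < \<infinity>\<close> tail] by blast
  have "eventually (\<lambda>\<nu>. \<rho> \<nu> < e / 2) sequentially"
    using order_tendstoD(2)[OF rho, of "e / 2"] \<open>0 < e\<close> by simp
  then have "eventually (\<lambda>\<nu>. emeasure lborel (radial_set (H \<nu>) - cball 0 R :: ((real^'n) \<times> real) set)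
      \<le> ennreal e) sequentially"
  proof eventually_elim
    case (elim \<nu>)
    have "ennreal (\<phi> K + \<rho> \<nu>) \<le> ennreal e"
      using K elim by (intro ennreal_leI) simp
    with R[of \<nu>] show ?case by (rule order_trans)
  qed
  then show "\<exists>R. eventually (\<lambda>\<nu>. emeasure lborel (radial_set (H \<nu>) - cball 0 R :: ((real^'n) \<times> real) set)
      \<le> ennreal e) sequentially"
    by blast
qed (rule \<open>0 < e\<close>)

section \<open>The Schwarz--Steiner symmetrization\<close>

text \<open>The length of the vertical fibre of the Schwarz symmetrization over a point at distance \<open>r\<close>
  from the axis; the \<open>max\<close> makes it antitone on all of \<open>\<real>\<close>.\<close>
definition schwarz_profile :: "((real^'n::finite) \<times> real) set \<Rightarrow> real \<Rightarrow> ennreal" where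
  "schwarz_profile E r = emeasure lebesgue {t. 0 < emeasure lebesgue (hslice E t) \<and>
      omega TYPE('n) * ennreal (max 0 r ^ CARD('n)) \<le> emeasure lebesgue (hslice E t)}"

lemma steiner_schwarz_eq_radial_set:
  fixes E :: "((real^'n::finite) \<times> real) set"
  shows "steiner (schwarz E) = radial_set (schwarz_profile E)"
proof -
  have "vfiber (schwarz E) x = {t. 0 < emeasure lebesgue (hslice E t) \<and>
      omega TYPE('n) * ennreal (max 0 (norm x) ^ CARD('n)) \<le> emeasure lebesgue (hslice E t)}" for x
    by (auto simp: vfiber_def schwarz_def)
  then show ?thesis
    by (auto simp: steiner_def radial_set_def schwarz_profile_def)
qed

lemma sets_hslice_superlevel:
  fixes E :: "((real^'n::finite) \<times> real) set"
  assumes E: "E \<in> sets lebesgue"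
  shows "{t. 0 < emeasure lebesgue (hslice E t) \<and> c \<le> emeasure lebesgue (hslice E t)} \<in> sets lebesgue"
proof -
  obtain B N N' where BN: "E = B \<union> N" "N \<subseteq> N'" "N' \<in> null_sets lborel" "B \<in> sets lborel"
    using sets_completionE[OF E] by metis
  define g where "g t = emeasure lborel ((\<lambda>y. (y, t)) -` B)" for t
  have B_fibre: "(\<lambda>y. (y, t)) -` B \<in> sets lborel" for t
    using BN(4) unfolding lborel_prod[symmetric] by (rule sets_Pair2)
  have "AE p in lebesgue. p \<in> E \<longleftrightarrow> p \<in> B"
    using BN by (auto intro!: AE_completion elim!: eventually_mono dest: AE_not_in)
  then have "AE t in lborel. AE y in lebesgue. (y, t) \<in> E \<longleftrightarrow> (y, t) \<in> B"
    by (rule AE_lebesgue_fibres(2))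
  then have "AE t in lborel. emeasure lebesgue (hslice E t) = g t"
  proof eventually_elim
    case (elim t)
    then have "AE y in lebesgue. y \<in> (\<lambda>y. (y, t)) -` B \<longleftrightarrow> y \<in> hslice E t"
      by (auto simp: hslice_def elim: eventually_mono)
    from completion_AE_mem_iff(2)[OF this sets_completionI_sets[OF B_fibre]] show ?case
      using emeasure_lebesgue_borel[OF B_fibre] by (simp add: g_def)
  qed
  then have ae: "AE t in lebesgue. t \<in> {t. 0 < g t \<and> c \<le> g t} \<longleftrightarrow>
      t \<in> {t. 0 < emeasure lebesgue (hslice E t) \<and> c \<le> emeasure lebesgue (hslice E t)}"
    by (intro AE_completion) (auto elim: eventually_mono)
  have "g \<in> borel_measurable lborel"
    using BN(4) unfolding g_def lborel_prod[symmetric] by (rule lborel_pair.measurable_emeasure_Pair2)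
  then have "{t \<in> space lborel. 0 < g t \<and> c \<le> g t} \<in> sets lborel"
    by measurable
  then have "{t. 0 < g t \<and> c \<le> g t} \<in> sets lebesgue"
    by simp
  from completion_AE_mem_iff(1)[OF ae this] show ?thesis
    by simp
qed

lemma antimono_schwarz_profile:
  fixes E :: "((real^'n::finite) \<times> real) set"
  assumes "E \<in> sets lebesgue"
  shows "antimono (schwarz_profile E)"
proof (rule antimonoI)
  fix r r' :: real assume "r \<le> r'"
  then have "omega TYPE('n) * ennreal (max 0 r ^ CARD('n)) \<le> omega TYPE('n) * ennreal (max 0 r' ^ CARD('n))"
    by (intro mult_left_mono ennreal_leI power_mono) auto
  then show "schwarz_profile E r' \<le> schwarz_profile E r"
    unfolding schwarz_profile_def
    by (intro emeasure_mono sets_hslice_superlevel[OF assms]) (auto intro: order_trans)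
qed

lemma ennreal_le_of_enn2ereal_le: "enn2ereal x \<le> ereal c \<Longrightarrow> x \<le> ennreal c"
  using e2ennreal_mono[of "enn2ereal x" "ereal c"] by simp

theorem lemma5p6:
  fixes \<phi> :: "nat \<Rightarrow> real" and \<rho> :: "nat \<Rightarrow> real"
    and Es :: "nat \<Rightarrow> ((real^'n::finite) \<times> real) set"
  assumes phi_pos: "\<And>k. \<phi> k > 0"
    and phi_lim: "\<phi> \<longlonglongrightarrow> 0"
    and rho_lim: "\<rho> \<longlonglongrightarrow> 0"
    and meas: "\<And>\<nu>. Es \<nu> \<in> sets lebesgue"
    and symm: "\<And>\<nu>. sdiff (Es \<nu>) (steiner (schwarz (Es \<nu>))) \<in> null_sets lebesgue"
    and vol: "\<And>\<nu>. emeasure lebesgue (Es \<nu>) = emeasure lebesgue (cball (0::(real^'n) \<times> real) 1)"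
    and tail: "\<And>\<nu> K. enn2ereal (\<Sum>\<^sub>\<infinity> k\<in>{k::int. \<bar>k\<bar> > int K}. emeasure lebesgue (layer (Es \<nu>) k))
                 \<le> ereal (\<phi> K + \<rho> \<nu>)"
  shows "\<forall>\<sigma>::nat \<Rightarrow> nat. \<exists>r. strict_mono r \<and> (\<exists>E \<in> sets lebesgue.
           ((\<lambda>n. emeasure lebesgue (sdiff (Es (\<sigma> (r n))) E)) \<longlongrightarrow> 0) sequentially)"
proof
  fix \<sigma> :: "nat \<Rightarrow> nat"
  define H where "H \<nu> = schwarz_profile (Es \<nu>)" for \<nu>
  have anti: "antimono (H \<nu>)" for \<nu>
    unfolding H_def by (rule antimono_schwarz_profile[OF meas])
  have null: "sdiff (Es \<nu>) (radial_set (H \<nu>)) \<in> null_sets lebesgue" for \<nu>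
    using symm[of \<nu>] by (simp add: H_def steiner_schwarz_eq_radial_set)
  have ball: "emeasure lebesgue (cball (0::(real^'n) \<times> real) 1) < \<infinity>"
    using emeasure_lborel_cball_finite emeasure_lebesgue_borel[of "cball 0 1"] by simp
  have tight: "\<exists>R. \<forall>\<nu>. emeasure lborel (radial_set (H \<nu>) - cball 0 R :: ((real^'n) \<times> real) set) \<le> ennreal e"
    if "0 < e" for e
    using ennreal_le_of_enn2ereal_le[OF tail] vol
    by (intro radial_sets_uniformly_tight[OF anti null _ ball _ phi_lim rho_lim that]) simp_all
  obtain s S where s: "strict_mono s" and S: "S \<in> sets lborel" and conv:
    "(\<lambda>n. emeasure lborel (sdiff (radial_set (H (\<sigma> (s n)))) S :: ((real^'n) \<times> real) set)) \<longlonglongrightarrow> 0"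
    using radial_sets_convergent_subseq[where H="\<lambda>\<nu>. H (\<sigma> \<nu>)"] anti tight by metis
  then show "\<exists>r. strict_mono r \<and> (\<exists>E \<in> sets lebesgue.
      ((\<lambda>n. emeasure lebesgue (sdiff (Es (\<sigma> (r n))) E)) \<longlongrightarrow> 0) sequentially)"
    using conv emeasure_sdiff_eq_of_sdiff_null[OF null radial_set_borel[OF anti] S]
    by (intro exI[of _ s] conjI s bexI[of _ S]) auto
qed

end
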